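(* Let $B$ be a $d\times d$ integral matrix with $|\det(B)|=2$. Then there exist natural numbers $p\le d$, $n_0$, $m_0$ and a row vector $\vec r=[r_1,\dots,r_{p-1},0,\dots,0]$ with $r_j\in\{0,1\}$ such that $$B=L^{(p)}_{\vec r}D_pV,\qquad B=I_{pd}M^{(p)}_{\vec r}D_dU,\qquad B=V_1V_2\cdots V_{n_0}D_dU_1U_2\cdots U_{m_0},$$ where $V,U\in\mathfrak M$ and $V_j,U_i\in\mathfrak G$.
   Context: $I$ is the $d\times d$ identity; $\Delta_{ij}$ is the $d\times d$ matrix with $1$ in position $(i,j)$ and $0$ elsewhere; $I_{ij}$ is the matrix obtained from $I$ by interchanging columns $i$ and $j$ (so $I_{ii}=I$); $D_p=I+\Delta_{pp}$; $S_p=I-2\Delta_{pp}$. $\mathfrak M$ is the group of $d\times d$ integral matrices with determinant $\pm1$, and $\mathfrak G=\{S_p\}\cup\{I\pm\Delta_{ij}:i\ne j\}\cup\{I_{ij}\}$ (elementary matrices). For $\vec r=[r_1,\dots,r_{p-1},0,\dots,0]$: $L^{(p)}_{\vec r}=I+\sum_{j=1}^{p-1}r_j\Delta_{pj}$ and $M^{(p)}_{\vec r}=I+\sum_{j=1}^{p-1}r_j\Delta_{dj}$. *)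

theory Defs
  imports "Jordan_Normal_Form.Determinant"
begin

(* All indices below are 1-based as in the paper: i, j, p range over {1..d};
   the underlying JNF matrices are 0-indexed, hence the shifts "- 1". *)

definition Delta :: "nat \<Rightarrow> nat \<Rightarrow> nat \<Rightarrow> int mat" where
  "Delta d i j = mat d d (\<lambda>(a,b). if a = i - 1 \<and> b = j - 1 then 1 else 0)"

definition Iswap :: "nat \<Rightarrow> nat \<Rightarrow> nat \<Rightarrow> int mat" where
  "Iswap d i j = mat d d (\<lambda>(a,b).
     if b = i - 1 then (if a = j - 1 then 1 else 0)
     else if b = j - 1 then (if a = i - 1 then 1 else 0)
     else if a = b then 1 else 0)"

definition Dmat :: "nat \<Rightarrow> nat \<Rightarrow> int mat" where
  "Dmat d p = 1\<^sub>m d + Delta d p p"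

definition Smat :: "nat \<Rightarrow> nat \<Rightarrow> int mat" where
  "Smat d p = 1\<^sub>m d - 2 \<cdot>\<^sub>m Delta d p p"

(* L^{(p)}_r = I + sum_{j=1}^{p-1} r_j Delta_{pj} *)
definition Lmat :: "nat \<Rightarrow> nat \<Rightarrow> (nat \<Rightarrow> int) \<Rightarrow> int mat" where
  "Lmat d p r = 1\<^sub>m d + mat d d (\<lambda>(a,b).
     if a = p - 1 \<and> 1 \<le> b + 1 \<and> b + 1 \<le> p - 1 then r (b + 1) else 0)"

(* M^{(p)}_r = I + sum_{j=1}^{p-1} r_j Delta_{dj} *)
definition Mmat :: "nat \<Rightarrow> nat \<Rightarrow> (nat \<Rightarrow> int) \<Rightarrow> int mat" where
  "Mmat d p r = 1\<^sub>m d + mat d d (\<lambda>(a,b).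
     if a = d - 1 \<and> 1 \<le> b + 1 \<and> b + 1 \<le> p - 1 then r (b + 1) else 0)"

definition unimod :: "nat \<Rightarrow> int mat set" where
  "unimod d = {A \<in> carrier_mat d d. det A = 1 \<or> det A = -1}"

definition elem :: "nat \<Rightarrow> int mat set" where
  "elem d = {Smat d p | p. 1 \<le> p \<and> p \<le> d}
     \<union> {1\<^sub>m d + Delta d i j | i j. 1 \<le> i \<and> i \<le> d \<and> 1 \<le> j \<and> j \<le> d \<and> i \<noteq> j}
     \<union> {1\<^sub>m d - Delta d i j | i j. 1 \<le> i \<and> i \<le> d \<and> 1 \<le> j \<and> j \<le> d \<and> i \<noteq> j}
     \<union> {Iswap d i j | i j. 1 \<le> i \<and> i \<le> d \<and> 1 \<le> j \<and> j \<le> d}"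

definition prod_mats :: "nat \<Rightarrow> int mat list \<Rightarrow> int mat" where
  "prod_mats d As = foldr (\<lambda>A M. A * M) As (1\<^sub>m d)"

end

theory Submission
  imports Defs "Jordan_Normal_Form.Column_Operations" "HOL-Library.Z2"
begin

(*
  Since det B = 2 or -2 is even, B is singular over GF(2). If q is the last nonzero coordinate of a
  kernel vector of B^T over GF(2), then row q of B is congruent mod 2 to a 0/1-combination of the
  rows above it; subtracting that combination from row q and halving the row gives an integral V
  with B = L D_p V for p = q + 1, and det V = 1 or -1. Conjugation by the transposition I_pd moves
  the p-th row and column to the last position, I_pd M D_d I_pd = L D_p, hence B = I_pd M D_d U
  with U = I_pd V. Finally, every unimodular integral matrix is a product of elementary matrices:
  Euclid's algorithm on the columns makes it upper triangular with diagonal entries 1 or -1, and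
  the remaining entries are cleared from the rightmost column on.
*)

section \<open>Elementary matrices as row operations\<close>

lemma Smat_eq_multrow_mat: "Smat d p = multrow_mat d (p - 1) (-1)"
  unfolding Smat_def Delta_def by (rule eq_matI) auto

lemma Dmat_eq_multrow_mat: "Dmat d p = multrow_mat d (p - 1) 2"
  unfolding Dmat_def Delta_def by (rule eq_matI) auto

lemma one_plus_Delta_eq_addrow_mat: "1\<^sub>m d + Delta d i j = addrow_mat d 1 (i - 1) (j - 1)"
  unfolding Delta_def by (rule eq_matI) auto

lemma one_minus_Delta_eq_addrow_mat: "1\<^sub>m d - Delta d i j = addrow_mat d (-1) (i - 1) (j - 1)"
  unfolding Delta_def by (rule eq_matI) auto

lemma Iswap_eq_swaprows_mat: "Iswap d i j = swaprows_mat d (i - 1) (j - 1)"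
  unfolding Iswap_def by (rule eq_matI) auto

lemma elem_eq:
  "elem d = {multrow_mat d k (-1) | k. k < d}
    \<union> {addrow_mat d a k l | a k l. (a = 1 \<or> a = -1) \<and> k < d \<and> l < d \<and> k \<noteq> l}
    \<union> {swaprows_mat d k l | k l. k < d \<and> l < d}" (is "_ = ?rhs")
proof (intro equalityI subsetI)
  fix G assume "G \<in> elem d"
  then show "G \<in> ?rhs"
    unfolding elem_def Smat_eq_multrow_mat one_plus_Delta_eq_addrow_mat
      one_minus_Delta_eq_addrow_mat Iswap_eq_swaprows_mat
  proof (elim UnE CollectE exE conjE)
    fix p assume "G = multrow_mat d (p - 1) (-1)" "1 \<le> p" "p \<le> d"
    moreover have "p - 1 < d" using \<open>1 \<le> p\<close> \<open>p \<le> d\<close> by simp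
    ultimately show ?thesis by blast
  next
    fix i j assume "G = addrow_mat d 1 (i - 1) (j - 1)" "1 \<le> i" "i \<le> d" "1 \<le> j" "j \<le> d" "i \<noteq> j"
    moreover have "i - 1 < d" "j - 1 < d" "i - 1 \<noteq> j - 1" using calculation(2-) by auto
    ultimately show ?thesis by blast
  next
    fix i j assume "G = addrow_mat d (-1) (i - 1) (j - 1)" "1 \<le> i" "i \<le> d" "1 \<le> j" "j \<le> d" "i \<noteq> j"
    moreover have "i - 1 < d" "j - 1 < d" "i - 1 \<noteq> j - 1" using calculation(2-) by auto
    ultimately show ?thesis by blast
  next
    fix i j assume "G = swaprows_mat d (i - 1) (j - 1)" "1 \<le> i" "i \<le> d" "1 \<le> j" "j \<le> d"
    moreover have "i - 1 < d" "j - 1 < d" using calculation(2-) by auto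
    ultimately show ?thesis by blast
  qed
next
  fix G assume "G \<in> ?rhs"
  then show "G \<in> elem d"
  proof (elim UnE CollectE exE conjE disjE)
    fix k assume "G = multrow_mat d k (-1)" "k < d"
    then have "G = Smat d (Suc k)" "1 \<le> Suc k" "Suc k \<le> d" by (simp_all add: Smat_eq_multrow_mat)
    then show ?thesis unfolding elem_def by blast
  next
    fix a k l assume "G = addrow_mat d a k l" "a = 1" "k < d" "l < d" "k \<noteq> l"
    then have "G = 1\<^sub>m d + Delta d (Suc k) (Suc l)" "1 \<le> Suc k" "Suc k \<le> d" "1 \<le> Suc l"
      "Suc l \<le> d" "Suc k \<noteq> Suc l" by (simp_all add: one_plus_Delta_eq_addrow_mat)
    then show ?thesis unfolding elem_def by blast
  next
    fix a k l assume "G = addrow_mat d a k l" "a = -1" "k < d" "l < d" "k \<noteq> l"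
    then have "G = 1\<^sub>m d - Delta d (Suc k) (Suc l)" "1 \<le> Suc k" "Suc k \<le> d" "1 \<le> Suc l"
      "Suc l \<le> d" "Suc k \<noteq> Suc l" by (simp_all add: one_minus_Delta_eq_addrow_mat)
    then show ?thesis unfolding elem_def by blast
  next
    fix k l assume "G = swaprows_mat d k l" "k < d" "l < d"
    then have "G = Iswap d (Suc k) (Suc l)" "1 \<le> Suc k" "Suc k \<le> d" "1 \<le> Suc l" "Suc l \<le> d"
      by (simp_all add: Iswap_eq_swaprows_mat)
    then show ?thesis unfolding elem_def by blast
  qed
qed

lemma elem_carrier: "G \<in> elem d \<Longrightarrow> G \<in> carrier_mat d d"
  unfolding elem_eq by auto

lemma det_elem:
  assumes "G \<in> elem d"
  shows "\<bar>det G\<bar> = 1"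
proof -
  have "\<bar>det (swaprows_mat d k l :: int mat)\<bar> = 1" if "k < d" "l < d" for k l
  proof (cases "k = l")
    case True
    then have "swaprows_mat d k l = (1\<^sub>m d :: int mat)" using that by (intro eq_matI) auto
    then show ?thesis by simp
  qed (use that in \<open>simp add: det_swaprows_mat\<close>)
  then show ?thesis
    using assms unfolding elem_eq
    by (elim UnE CollectE exE conjE disjE) (simp_all add: det_multrow_mat det_addrow_mat)
qed

lemma multrow_mat_in_elem: "k < d \<Longrightarrow> multrow_mat d k (-1) \<in> elem d"
  unfolding elem_eq by blast

lemma addrow_mat_in_elem:
  "a = 1 \<or> a = -1 \<Longrightarrow> k < d \<Longrightarrow> l < d \<Longrightarrow> k \<noteq> l \<Longrightarrow> addrow_mat d a k l \<in> elem d"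
  unfolding elem_eq by blast

lemma swaprows_mat_in_elem: "k < d \<Longrightarrow> l < d \<Longrightarrow> swaprows_mat d k l \<in> elem d"
  unfolding elem_eq by blast

section \<open>Products of elementary matrices\<close>

lemma prod_mats_carrier: "set Es \<subseteq> elem d \<Longrightarrow> prod_mats d Es \<in> carrier_mat d d"
  by (induction Es) (auto simp: prod_mats_def dest: elem_carrier)

lemma prod_mats_append:
  assumes "set Es \<subseteq> elem d" "set Fs \<subseteq> elem d"
  shows "prod_mats d (Es @ Fs) = prod_mats d Es * prod_mats d Fs"
  using assms
proof (induction Es)
  case Nil
  then show ?case using prod_mats_carrier[of Fs d] by (simp add: prod_mats_def)
next
  case (Cons G Es)
  then have G: "G \<in> carrier_mat d d" and Es: "prod_mats d Es \<in> carrier_mat d d"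
    and Fs: "prod_mats d Fs \<in> carrier_mat d d"
    by (auto intro: elem_carrier prod_mats_carrier)
  have "prod_mats d ((G # Es) @ Fs) = G * prod_mats d (Es @ Fs)" by (simp add: prod_mats_def)
  also have "\<dots> = G * prod_mats d Es * prod_mats d Fs"
    using Cons assoc_mult_mat[OF G Es Fs] by simp
  also have "G * prod_mats d Es = prod_mats d (G # Es)" by (simp add: prod_mats_def)
  finally show ?case .
qed

definition elem_prod :: "nat \<Rightarrow> int mat \<Rightarrow> bool" where
  "elem_prod d A \<longleftrightarrow> (\<exists>Es. set Es \<subseteq> elem d \<and> A = prod_mats d Es)"

lemma elem_prod_carrier: "elem_prod d A \<Longrightarrow> A \<in> carrier_mat d d"
  unfolding elem_prod_def using prod_mats_carrier by blast

lemma elem_prod_one: "elem_prod d (1\<^sub>m d)"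
  unfolding elem_prod_def by (rule exI[of _ "[]"]) (simp add: prod_mats_def)

lemma elem_prod_elem: "G \<in> elem d \<Longrightarrow> elem_prod d G"
  unfolding elem_prod_def
  by (rule exI[of _ "[G]"]) (simp add: prod_mats_def right_mult_one_mat[OF elem_carrier])

lemma elem_prod_mult: "elem_prod d A \<Longrightarrow> elem_prod d B \<Longrightarrow> elem_prod d (A * B)"
  unfolding elem_prod_def by (metis le_sup_iff prod_mats_append set_append)

lemma addrow_mat_add:
  assumes "k < d" "l < d" "k \<noteq> l"
  shows "addrow_mat d (a + b) k l = addrow_mat d a k l * addrow_mat d (b :: int) k l"
  using assms by (subst addrow_mat[symmetric, of _ d d]) (auto intro!: eq_matI simp: algebra_simps)

lemma elem_prod_addrow_mat:
  assumes "k < d" "l < d" "k \<noteq> l"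
  shows "elem_prod d (addrow_mat d a k l)"
proof (induction a rule: int_induct[where k = 0])
  case base
  have "addrow_mat d 0 k l = (1\<^sub>m d :: int mat)" by (rule eq_matI) auto
  then show ?case using elem_prod_one by simp
next
  case (step1 i)
  then show ?case
    using addrow_mat_add[OF assms, of 1 i] elem_prod_mult elem_prod_elem addrow_mat_in_elem assms
    by (metis add.commute)
next
  case (step2 i)
  then show ?case
    using addrow_mat_add[OF assms, of "-1" i] elem_prod_mult elem_prod_elem addrow_mat_in_elem assms
    by (metis uminus_add_conv_diff add.commute)
qed

lemma elem_prod_cancel_left:
  assumes F: "elem_prod d F" and inv: "F * G = 1\<^sub>m d" and G: "G \<in> carrier_mat d d"
    and A: "A \<in> carrier_mat d d" and GA: "elem_prod d (G * A)"
  shows "elem_prod d A"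
proof -
  have "A = F * (G * A)"
    using assoc_mult_mat[OF elem_prod_carrier[OF F] G A] inv A by simp
  then show ?thesis using elem_prod_mult[OF F GA] by simp
qed

lemma elem_prod_of_multrow:
  assumes A: "A \<in> carrier_mat d d" and k: "k < d" and "elem_prod d (multrow k (-1) A)"
  shows "elem_prod d A"
proof (rule elem_prod_cancel_left[OF elem_prod_elem[OF multrow_mat_in_elem[OF k]] _ _ A])
  let ?E = "multrow_mat d k (-1) :: int mat"
  have "?E * ?E = multrow k (-1) ?E" by (rule multrow_mat[symmetric, of _ d d]) simp
  also have "\<dots> = 1\<^sub>m d" by (rule eq_matI) auto
  finally show "?E * ?E = 1\<^sub>m d" .
  show "elem_prod d (?E * A)" using assms multrow_mat[OF A] by simp
qed simp

lemma elem_prod_of_swaprows: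
  assumes A: "A \<in> carrier_mat d d" and kl: "k < d" "l < d" and "elem_prod d (swaprows k l A)"
  shows "elem_prod d A"
  by (rule elem_prod_cancel_left[OF elem_prod_elem[OF swaprows_mat_in_elem[OF kl]]
        swaprows_mat_inv[OF kl] _ A]) (use assms swaprows_mat[OF A kl] in simp_all)

lemma elem_prod_of_addrow:
  assumes A: "A \<in> carrier_mat d d" and kl: "k < d" "l < d" "k \<noteq> l" and "elem_prod d (addrow a k l A)"
  shows "elem_prod d A"
  by (rule elem_prod_cancel_left[OF elem_prod_addrow_mat[OF kl, of "-a"]
        addrow_mat_inv[OF kl, of "-a", unfolded minus_minus] _ A])
    (use assms addrow_mat[OF A kl(2)] in simp_all)

section \<open>Unimodular matrices are products of elementary matrices\<close>

definition off_identity :: "nat \<Rightarrow> int mat \<Rightarrow> (nat \<times> nat) set" where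
  "off_identity d A = {(i, j). i < d \<and> j < d \<and> A $$ (i, j) \<noteq> 1\<^sub>m d $$ (i, j)}"

lemma finite_off_identity: "finite (off_identity d A)"
  by (rule finite_subset[of _ "{..<d} \<times> {..<d}"]) (auto simp: off_identity_def)

lemma unit_upper_triangular_pivot:
  assumes A: "A \<in> carrier_mat d d" and ut: "upper_triangular A"
    and diag: "\<forall>k<d. A $$ (k, k) = 1" and ne: "off_identity d A \<noteq> {}"
  obtains i c where "(i, c) \<in> off_identity d A" "i < c" "c < d" "A $$ (i, c) \<noteq> 0"
    "\<forall>j<d. A $$ (c, j) = 1\<^sub>m d $$ (c, j)"
proof -
  define c where "c = Max (snd ` off_identity d A)"
  have "c \<in> snd ` off_identity d A"
    using ne finite_off_identity by (simp add: c_def)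
  then obtain i where ic: "(i, c) \<in> off_identity d A" by force
  have col_max: "j \<le> c" if "(r, j) \<in> off_identity d A" for r j
  proof -
    have "j \<in> snd ` off_identity d A" using that by force
    then show ?thesis unfolding c_def by (rule Max_ge[OF finite_imageI[OF finite_off_identity]])
  qed
  have i: "i < c" "c < d" "A $$ (i, c) \<noteq> 0"
    using ic ut A diag by (auto simp: off_identity_def upper_triangular_def split: if_splits)
      (metis linorder_neqE_nat)
  have "A $$ (c, j) = 1\<^sub>m d $$ (c, j)" if "j < d" for j
  proof (rule ccontr)
    assume "A $$ (c, j) \<noteq> 1\<^sub>m d $$ (c, j)"
    then have "(c, j) \<in> off_identity d A" using i that by (simp add: off_identity_def)
    moreover have "(c, c) \<notin> off_identity d A" using diag i by (simp add: off_identity_def)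
    ultimately have "j < c" using col_max[of c j] by (cases "j = c") auto
    then show False using \<open>A $$ (c, j) \<noteq> _\<close> ut A i that by (auto simp: upper_triangular_def)
  qed
  then show ?thesis using that ic i by blast
qed

lemma elem_prod_if_unit_upper_triangular:
  assumes "A \<in> carrier_mat d d" "upper_triangular A" "\<forall>i<d. \<bar>A $$ (i, i)\<bar> = 1"
  shows "elem_prod d A"
  using assms
proof (induction "card (off_identity d A)" arbitrary: A rule: less_induct)
  case less
  note A = less.prems(1) and ut = less.prems(2) and diag = less.prems(3)
  have reduce: "elem_prod d A"
    if A': "A' \<in> carrier_mat d d" "upper_triangular A'" "\<forall>i<d. \<bar>A' $$ (i, i)\<bar> = 1"
      and shrink: "off_identity d A' = off_identity d A - {x}" "x \<in> off_identity d A"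
      and lift: "elem_prod d A' \<Longrightarrow> elem_prod d A" for A' x
  proof -
    have "card (off_identity d A') < card (off_identity d A)"
      using shrink by (metis card_Diff1_less finite_off_identity)
    then show ?thesis using less.hyps A' lift by blast
  qed
  show ?case
  proof (cases "\<exists>k<d. A $$ (k, k) = -1")
    case True
    then obtain k where k: "k < d" "A $$ (k, k) = -1" by blast
    show ?thesis
    proof (rule reduce[of "multrow k (-1) A" "(k, k)"])
      show "off_identity d (multrow k (-1) A) = off_identity d A - {(k, k)}"
        using A k by (auto simp: off_identity_def split: if_splits)
    qed (use A ut diag k elem_prod_of_multrow in \<open>auto simp: off_identity_def upper_triangular_def\<close>)
  next
    case False
    then have diag1: "\<forall>k<d. A $$ (k, k) = 1"
      using diag by (metis abs_eq_iff')
    show ?thesis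
    proof (cases "off_identity d A = {}")
      case True
      then have "A = 1\<^sub>m d" using A by (intro eq_matI) (auto simp: off_identity_def)
      then show ?thesis using elem_prod_one by simp
    next
      case False
      then obtain i c where ic: "(i, c) \<in> off_identity d A" "i < c" "c < d" "A $$ (i, c) \<noteq> 0"
        and row_c: "\<forall>j<d. A $$ (c, j) = 1\<^sub>m d $$ (c, j)"
        using unit_upper_triangular_pivot[OF A ut diag1] by blast
      show ?thesis
      proof (rule reduce[of "addrow (- A $$ (i, c)) i c A" "(i, c)"])
        show "off_identity d (addrow (- A $$ (i, c)) i c A) = off_identity d A - {(i, c)}"
          using A ic row_c by (auto simp: off_identity_def split: if_splits)
      qed (use A ut diag ic row_c elem_prod_of_addrow[of A d i c] in
             \<open>auto simp: upper_triangular_def\<close>)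
    qed
  qed
qed

lemma elem_prod_if_upper_triangular:
  assumes A: "A \<in> carrier_mat d d" and ut: "upper_triangular A" and det: "\<bar>det A\<bar> = 1"
  shows "elem_prod d A"
proof (rule elem_prod_if_unit_upper_triangular[OF A ut], intro allI impI)
  fix k assume "k < d"
  then have "A $$ (k, k) dvd (\<Prod>i = 0..<d. A $$ (i, i))" by (intro dvd_prodI) auto
  also have "(\<Prod>i = 0..<d. A $$ (i, i)) = det A"
    using det_upper_triangular[OF ut A] A by (simp add: prod_list_diag_prod)
  finally show "\<bar>A $$ (k, k)\<bar> = 1" using det by (metis dvd_trans zdvd1_eq dvd_refl)
qed

definition upper_triangular_upto :: "nat \<Rightarrow> 'a :: zero mat \<Rightarrow> bool" where
  "upper_triangular_upto c A \<longleftrightarrow> (\<forall>i < dim_row A. \<forall>j < min i c. A $$ (i, j) = 0)"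

lemma column_entries_cases:
  fixes f :: "nat \<Rightarrow> int"
  obtains (cleared) "\<forall>r. c < r \<longrightarrow> r < d \<longrightarrow> f r = 0"
    | (two) a b where "c \<le> a" "a < d" "c \<le> b" "b < d" "a \<noteq> b" "f b \<noteq> 0" "\<bar>f b\<bar> \<le> \<bar>f a\<bar>"
    | (one) i where "c < i" "i < d" "\<forall>r. c \<le> r \<longrightarrow> r < d \<longrightarrow> r \<noteq> i \<longrightarrow> f r = 0"
proof (cases "\<forall>r. c < r \<longrightarrow> r < d \<longrightarrow> f r = 0")
  case False
  then obtain i where i: "c < i" "i < d" "f i \<noteq> 0" by blast
  show ?thesis
  proof (cases "\<exists>r. c \<le> r \<and> r < d \<and> r \<noteq> i \<and> f r \<noteq> 0")
    case True
    then obtain r where r: "c \<le> r" "r < d" "r \<noteq> i" "f r \<noteq> 0" by blast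
    show ?thesis
    proof (cases "\<bar>f i\<bar> \<le> \<bar>f r\<bar>")
      case True
      then show ?thesis using that(2)[of r i] i r by auto
    next
      case False
      then show ?thesis using that(2)[of i r] i r by auto
    qed
  qed (use that(3) i in blast)
qed (rule that(1))

lemma column_euclid_step:
  assumes A: "A \<in> carrier_mat d d" and ut: "upper_triangular_upto c A"
    and ab: "c \<le> a" "a < d" "c \<le> b" "b < d" "a \<noteq> b"
    and nonzero: "A $$ (b, c) \<noteq> 0" and le: "\<bar>A $$ (b, c)\<bar> \<le> \<bar>A $$ (a, c)\<bar>"
  obtains s where "(\<Sum>r = c..<d. nat \<bar>addrow s a b A $$ (r, c)\<bar>) < (\<Sum>r = c..<d. nat \<bar>A $$ (r, c)\<bar>)"
    "upper_triangular_upto c (addrow s a b A)"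
proof -
  define s where "s = - (sgn (A $$ (a, c)) * sgn (A $$ (b, c)))"
  let ?A = "addrow s a b A"
  have entry: "?A $$ (r, j) = (if r = a then s * A $$ (b, j) + A $$ (a, j) else A $$ (r, j))"
    if "r < d" "j < d" for r j
    using A that by simp
  have "?A $$ (a, c) = s * A $$ (b, c) + A $$ (a, c)" using entry ab by simp
  then have "\<bar>?A $$ (a, c)\<bar> = \<bar>A $$ (a, c)\<bar> - \<bar>A $$ (b, c)\<bar>"
    using nonzero le by (auto simp: s_def sgn_if abs_if split: if_splits)
  then have "(\<Sum>r = c..<d. nat \<bar>?A $$ (r, c)\<bar>) < (\<Sum>r = c..<d. nat \<bar>A $$ (r, c)\<bar>)"
    using ab nonzero by (intro sum_strict_mono_ex1) (auto simp: entry intro!: bexI[of _ a] nat_mono)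
  moreover have "upper_triangular_upto c ?A"
    using ut A ab by (auto simp: upper_triangular_upto_def entry)
  ultimately show ?thesis using that by blast
qed

lemma elem_prod_by_clearing_column:
  assumes c: "c < d"
    and next_column: "\<And>A. A \<in> carrier_mat d d \<Longrightarrow> upper_triangular_upto (Suc c) A \<Longrightarrow>
      \<bar>det A\<bar> = 1 \<Longrightarrow> elem_prod d A"
  shows "A \<in> carrier_mat d d \<Longrightarrow> upper_triangular_upto c A \<Longrightarrow> \<bar>det A\<bar> = 1 \<Longrightarrow> elem_prod d A"
proof (induction "\<Sum>r = c..<d. nat \<bar>A $$ (r, c)\<bar>" arbitrary: A rule: less_induct)
  case less
  note A = less.prems(1) and ut = less.prems(2) and det = less.prems(3)
  show ?case
  proof (cases rule: column_entries_cases[of c d "\<lambda>r. A $$ (r, c)"])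
    case cleared
    then have "upper_triangular_upto (Suc c) A"
      using ut A by (auto simp: upper_triangular_upto_def less_Suc_eq)
    then show ?thesis using next_column A det by blast
  next
    case (two a b)
    then obtain s where "(\<Sum>r = c..<d. nat \<bar>addrow s a b A $$ (r, c)\<bar>) < (\<Sum>r = c..<d. nat \<bar>A $$ (r, c)\<bar>)"
      and "upper_triangular_upto c (addrow s a b A)"
      using column_euclid_step[OF A ut] by blast
    moreover have "\<bar>det (addrow s a b A)\<bar> = 1"
      using det det_addrow[OF two(4,5) A] by simp
    ultimately have "elem_prod d (addrow s a b A)" using less.hyps A by simp
    then show ?thesis using elem_prod_of_addrow[OF A two(2,4,5)] by blast
  next
    case (one i)
    let ?A = "swaprows c i A"
    have "upper_triangular_upto (Suc c) ?A"
      using ut A one c by (auto simp: upper_triangular_upto_def less_Suc_eq)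
    moreover have "\<bar>det ?A\<bar> = 1"
      using det det_swaprows[OF c one(2) _ A] one by simp
    ultimately have "elem_prod d ?A" using next_column A by simp
    then show ?thesis using elem_prod_of_swaprows[OF A c one(2)] by blast
  qed
qed

lemma elem_prod_if_upper_triangular_upto:
  "A \<in> carrier_mat d d \<Longrightarrow> upper_triangular_upto c A \<Longrightarrow> \<bar>det A\<bar> = 1 \<Longrightarrow> elem_prod d A"
proof (induction "d - c" arbitrary: c A)
  case 0
  then have "upper_triangular A"
    by (auto simp: upper_triangular_upto_def upper_triangular_def)
  then show ?case using elem_prod_if_upper_triangular 0 by blast
next
  case (Suc m)
  then show ?case
    using elem_prod_by_clearing_column[of c d] Suc.hyps(1)[of "Suc c"] by simp
qed

lemma unimod_iff: "A \<in> unimod d \<longleftrightarrow> A \<in> carrier_mat d d \<and> \<bar>det A\<bar> = 1"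
  by (auto simp: unimod_def abs_if)

lemma elem_prod_if_unimod: "A \<in> unimod d \<Longrightarrow> elem_prod d A"
  using elem_prod_if_upper_triangular_upto[of A d 0]
  by (auto simp: unimod_iff upper_triangular_upto_def)

lemma unimod_mult: "A \<in> unimod d \<Longrightarrow> B \<in> unimod d \<Longrightarrow> A * B \<in> unimod d"
  by (auto simp: unimod_iff det_mult[of _ d] abs_mult)

lemma elem_in_unimod: "G \<in> elem d \<Longrightarrow> G \<in> unimod d"
  by (simp add: unimod_iff elem_carrier det_elem)

section \<open>The three factorizations\<close>

lemma of_int_bit_eq_0_iff: "(of_int x :: bit) = 0 \<longleftrightarrow> even x"
  by (metis bit_2_eq_0 dvd_field_iff even_of_int_iff)

lemma even_det_left_kernel_mod2:
  fixes B :: "int mat"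
  assumes B: "B \<in> carrier_mat d d" and det: "even (det B)"
  obtains w where "\<forall>i. w i \<in> {0, 1 :: int}" "\<exists>i<d. w i = 1"
    "\<forall>b<d. even (\<Sum>i<d. B $$ (i, b) * w i)"
proof -
  let ?h = "of_int :: int \<Rightarrow> bit"
  let ?Bt = "transpose_mat (map_mat ?h B)"
  have Bt: "?Bt \<in> carrier_mat d d" using B by auto
  have "det ?Bt = ?h (det B)" using B by (simp add: det_transpose)
  also have "\<dots> = 0" using det by (simp add: of_int_bit_eq_0_iff)
  finally obtain v where v: "v \<in> carrier_vec d" "v \<noteq> 0\<^sub>v d" "?Bt *\<^sub>v v = 0\<^sub>v d"
    using det_0_iff_vec_prod_zero_field[OF Bt] by auto
  define w where "w i = (if v $ i = 0 then 0 else 1 :: int)" for i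
  have vw: "v $ i = ?h (w i)" for i by (simp add: w_def)
  have "\<exists>i<d. w i = 1"
  proof (rule ccontr)
    assume "\<not> (\<exists>i<d. w i = 1)"
    then have "v = 0\<^sub>v d" using v(1) by (auto simp: w_def intro!: eq_vecI split: if_splits)
    with v(2) show False by simp
  qed
  moreover have "even (\<Sum>i<d. B $$ (i, b) * w i)" if b: "b < d" for b
  proof -
    have "0 = (?Bt *\<^sub>v v) $ b" using v(3) b by simp
    also have "\<dots> = (\<Sum>i<d. ?h (B $$ (i, b)) * v $ i)"
      using b B v(1) by (auto simp: scalar_prod_def lessThan_atLeast0 intro!: sum.cong)
    also have "\<dots> = ?h (\<Sum>i<d. B $$ (i, b) * w i)"
      by (simp add: vw of_int_hom.hom_sum of_int_hom.hom_mult)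
    finally show ?thesis by (metis of_int_bit_eq_0_iff)
  qed
  moreover have "\<forall>i. w i \<in> {0, 1}" by (simp add: w_def)
  ultimately show ?thesis using that by blast
qed

(* r is indexed from 1 as in Lmat: r (k + 1) is the coefficient of the row with index k *)
lemma even_det_row_dependence:
  fixes B :: "int mat"
  assumes "B \<in> carrier_mat d d" and "even (det B)"
  obtains q r where "q < d" "\<forall>j. r j \<in> {0, 1 :: int}"
    "\<forall>b<d. even (B $$ (q, b) + (\<Sum>k<q. r (k + 1) * B $$ (k, b)))"
proof -
  obtain w where w01: "\<forall>i. w i \<in> {0, 1 :: int}" and w1: "\<exists>i<d. w i = 1"
    and ev: "\<forall>b<d. even (\<Sum>i<d. B $$ (i, b) * w i)"
    using even_det_left_kernel_mod2[OF assms] by blast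
  define S where "S = {i. i < d \<and> w i = 1}"
  have "finite S" "S \<noteq> {}" using w1 by (auto simp: S_def)
  then have "Max S \<in> S" "\<And>i. i \<in> S \<Longrightarrow> i \<le> Max S" by simp_all
  define q where "q = Max S"
  have q: "q < d" "w q = 1" and above: "\<And>i. q < i \<Longrightarrow> i < d \<Longrightarrow> w i = 0"
    using \<open>Max S \<in> S\<close> \<open>\<And>i. i \<in> S \<Longrightarrow> i \<le> Max S\<close> w01 by (fastforce simp: q_def S_def)+
  define r where "r j = w (j - 1)" for j
  have "even (B $$ (q, b) + (\<Sum>k<q. r (k + 1) * B $$ (k, b)))" if b: "b < d" for b
  proof -
    have "{..<d} = {..<q} \<union> {q} \<union> {q<..<d}" using q by auto
    then have "(\<Sum>i<d. B $$ (i, b) * w i)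
        = (\<Sum>i<q. B $$ (i, b) * w i) + B $$ (q, b) * w q + (\<Sum>i\<in>{q<..<d}. B $$ (i, b) * w i)"
      by (simp add: sum.union_disjoint disjoint_iff)
    moreover have "(\<Sum>i\<in>{q<..<d}. B $$ (i, b) * w i) = 0" using above by simp
    moreover have "(\<Sum>i<q. B $$ (i, b) * w i) = (\<Sum>k<q. r (k + 1) * B $$ (k, b))"
      by (simp add: r_def mult.commute)
    ultimately have "(\<Sum>i<d. B $$ (i, b) * w i) = B $$ (q, b) + (\<Sum>k<q. r (k + 1) * B $$ (k, b))"
      using q by (simp add: add.commute)
    then show ?thesis using ev b by metis
  qed
  moreover have "\<forall>j. r j \<in> {0, 1}" using w01 by (simp add: r_def)
  ultimately show ?thesis using that q by blast
qed

lemma dim_Lmat [simp]: "dim_row (Lmat d p r) = d" "dim_col (Lmat d p r) = d"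
  by (simp_all add: Lmat_def)

lemma Lmat_carrier [simp]: "Lmat d p r \<in> carrier_mat d d"
  by (rule carrier_matI) simp_all

lemma dim_Mmat [simp]: "dim_row (Mmat d p r) = d" "dim_col (Mmat d p r) = d"
  by (simp_all add: Mmat_def)

lemma Mmat_carrier [simp]: "Mmat d p r \<in> carrier_mat d d"
  by (rule carrier_matI) simp_all

lemma Dmat_carrier [simp]: "Dmat d p \<in> carrier_mat d d"
  by (simp add: Dmat_eq_multrow_mat)

lemma Iswap_carrier [simp]: "Iswap d i j \<in> carrier_mat d d"
  by (simp add: Iswap_eq_swaprows_mat)

lemma index_Lmat:
  "a < d \<Longrightarrow> b < d \<Longrightarrow> Lmat d p r $$ (a, b) =
    (if a = b then 1 else 0) + (if a = p - 1 \<and> b < p - 1 then r (b + 1) else 0)"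
  by (auto simp: Lmat_def)

lemma index_Mmat:
  "a < d \<Longrightarrow> b < d \<Longrightarrow> Mmat d p r $$ (a, b) =
    (if a = b then 1 else 0) + (if a = d - 1 \<and> b < p - 1 then r (b + 1) else 0)"
  by (auto simp: Mmat_def)

lemma det_Lmat: "det (Lmat d p r) = 1"
  by (subst det_lower_triangular[of d]) (auto simp: index_Lmat prod_list_diag_prod intro!: prod.neutral)

lemma det_Mmat: "p \<le> d \<Longrightarrow> det (Mmat d p r) = 1"
  by (subst det_lower_triangular[of d]) (auto simp: index_Mmat prod_list_diag_prod intro!: prod.neutral)

lemma Mmat_in_unimod: "p \<le> d \<Longrightarrow> Mmat d p r \<in> unimod d"
  by (simp add: unimod_iff det_Mmat)

lemma det_Lmat_Dmat_mult:
  assumes p: "1 \<le> p" "p \<le> d" and V: "V \<in> carrier_mat d d"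
  shows "det (Lmat d p r * Dmat d p * V) = 2 * det V"
proof -
  have "det (Lmat d p r * Dmat d p * V) = det (Lmat d p r) * det (Dmat d p) * det V"
    by (simp add: det_mult[OF mult_carrier_mat[OF Lmat_carrier Dmat_carrier] V]
        det_mult[OF Lmat_carrier Dmat_carrier])
  also have "\<dots> = 2 * det V"
    using p by (simp add: det_Lmat Dmat_eq_multrow_mat det_multrow_mat)
  finally show ?thesis .
qed

lemma Lmat_mult_index:
  assumes X: "X \<in> carrier_mat d n" and p: "p \<le> d" and ab: "a < d" "b < n"
  shows "(Lmat d p r * X) $$ (a, b) =
    X $$ (a, b) + (if a = p - 1 then \<Sum>k<p - 1. r (k + 1) * X $$ (k, b) else 0)"
proof -
  have "(Lmat d p r * X) $$ (a, b) = (\<Sum>k<d. Lmat d p r $$ (a, k) * X $$ (k, b))"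
    using X ab by (auto simp: scalar_prod_def lessThan_atLeast0 intro!: sum.cong)
  also have "\<dots> = (\<Sum>k<d. (if k = a then X $$ (k, b) else 0)
      + (if a = p - 1 \<and> k < p - 1 then r (k + 1) * X $$ (k, b) else 0))"
    using ab by (intro sum.cong) (auto simp: index_Lmat)
  also have "\<dots> = X $$ (a, b)
      + (\<Sum>k<d. if a = p - 1 \<and> k < p - 1 then r (k + 1) * X $$ (k, b) else 0)"
    using ab by (simp add: sum.distrib)
  also have "(\<Sum>k<d. if a = p - 1 \<and> k < p - 1 then r (k + 1) * X $$ (k, b) else 0)
      = (if a = p - 1 then \<Sum>k\<in>{..<d} \<inter> {..<p - 1}. r (k + 1) * X $$ (k, b) else 0)"
    using sum.inter_restrict[of "{..<d}" "\<lambda>k. r (k + 1) * X $$ (k, b)" "{..<p - 1}"] by simp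
  also have "{..<d} \<inter> {..<p - 1} = {..<p - 1}" using p by auto
  finally show ?thesis using ab by simp
qed

lemma even_det_factor_Lmat_Dmat:
  assumes B: "B \<in> carrier_mat d d" and "even (det B)"
  obtains p r V where "1 \<le> p" "p \<le> d" "\<forall>j. r j \<in> {0, 1}" "V \<in> carrier_mat d d"
    "B = Lmat d p r * Dmat d p * V"
proof -
  obtain q r where q: "q < d" and r: "\<forall>j. r j \<in> {0, 1}"
    and ev: "\<forall>b<d. even (B $$ (q, b) + (\<Sum>k<q. r (k + 1) * B $$ (k, b)))"
    using even_det_row_dependence[OF assms] by blast
  define sg where "sg b = (\<Sum>k<q. r (k + 1) * B $$ (k, b))" for b
  define X where "X = mat d d (\<lambda>(a, b). if a = q then B $$ (q, b) - sg b else B $$ (a, b))"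
  define V where "V = mat d d (\<lambda>(a, b). if a = q then (B $$ (q, b) - sg b) div 2 else B $$ (a, b))"
  have V: "V \<in> carrier_mat d d" by (simp add: V_def)
  have "even (B $$ (q, b) - sg b)" if "b < d" for b
    using ev that by (simp add: sg_def)
  then have DV: "Dmat d (Suc q) * V = X"
    unfolding Dmat_eq_multrow_mat X_def
    by (subst multrow_mat[OF V, symmetric]) (auto simp: V_def intro!: eq_matI)
  have "(Lmat d (Suc q) r * X) $$ (a, b) = B $$ (a, b)" if "a < d" "b < d" for a b
  proof -
    have X: "X \<in> carrier_mat d d" by (simp add: X_def)
    have "(\<Sum>k<q. r (k + 1) * X $$ (k, b)) = sg b"
      unfolding sg_def using q that by (intro sum.cong) (auto simp: X_def)
    then have "(Lmat d (Suc q) r * X) $$ (a, b) = X $$ (a, b) + (if a = q then sg b else 0)"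
      using Lmat_mult_index[OF X, of "Suc q" a b r] q that by simp
    then show ?thesis using q that by (simp add: X_def)
  qed
  then have "Lmat d (Suc q) r * X = B" using B by (intro eq_matI) (auto simp: X_def)
  then have "B = Lmat d (Suc q) r * Dmat d (Suc q) * V"
    using DV assoc_mult_mat[OF Lmat_carrier Dmat_carrier V] by simp
  then show ?thesis using that[of "Suc q" r V] q r V by simp
qed

lemma Iswap_Mmat_Dmat_Iswap:
  assumes p: "1 \<le> p" "p \<le> d"
  shows "Iswap d p d * Mmat d p r * Dmat d d * Iswap d p d = Lmat d p r * Dmat d p"
proof -
  let ?M = "Mmat d p r" and ?q = "p - 1" and ?l = "d - 1"
  have ql: "?q < d" "?l < d" using p by auto
  have "Iswap d p d * ?M * Dmat d d * Iswap d p d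
      = swaprows_mat d ?q ?l * (?M * multrow_mat d ?l 2) * swaprows_mat d ?q ?l"
    by (simp add: Iswap_eq_swaprows_mat Dmat_eq_multrow_mat assoc_mult_mat[of _ d d _ d _ d])
  also have "\<dots> = swaprows_mat d ?q ?l * (?M * multrow_mat d ?l 2 * swaprows_mat d ?q ?l)"
    by (rule assoc_mult_mat[of _ d d _ d _ d]) auto
  also have "\<dots> = swaprows ?q ?l (swapcols ?q ?l (multcol ?l 2 ?M))"
  proof -
    have MD: "?M * multrow_mat d ?l 2 \<in> carrier_mat d d"
      by (rule mult_carrier_mat[OF Mmat_carrier multrow_mat_carrier])
    have "swapcols ?q ?l (multcol ?l 2 ?M) = ?M * multrow_mat d ?l 2 * swaprows_mat d ?q ?l"
      unfolding multcol_mat[OF Mmat_carrier] by (rule swapcols_mat[OF MD ql])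
    then show ?thesis
      using swaprows_mat[OF mult_carrier_mat[OF MD swaprows_mat_carrier] ql] by simp
  qed
  also have "\<dots> = multcol ?q 2 (Lmat d p r)"
    using p by (intro eq_matI) (auto simp: index_Mmat index_Lmat)
  also have "\<dots> = Lmat d p r * Dmat d p"
    by (simp add: Dmat_eq_multrow_mat multcol_mat[of _ d])
  finally show ?thesis .
qed

lemma Lmat_Dmat_eq_Iswap_Mmat_Dmat:
  assumes p: "1 \<le> p" "p \<le> d" and V: "V \<in> carrier_mat d d"
  shows "Lmat d p r * Dmat d p * V = Iswap d p d * Mmat d p r * Dmat d d * (Iswap d p d * V)"
proof -
  let ?S = "Iswap d p d"
  have SMD: "?S * Mmat d p r * Dmat d d \<in> carrier_mat d d"
    by (meson mult_carrier_mat Iswap_carrier Mmat_carrier Dmat_carrier)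
  have "Lmat d p r * Dmat d p * V = ?S * Mmat d p r * Dmat d d * ?S * V"
    using Iswap_Mmat_Dmat_Iswap[OF p, of r] by simp
  also have "\<dots> = ?S * Mmat d p r * Dmat d d * (?S * V)"
    by (rule assoc_mult_mat[OF SMD Iswap_carrier V])
  finally show ?thesis .
qed

theorem proposition3p4:
  fixes d :: nat and B :: "int mat"
  assumes "B \<in> carrier_mat d d" and "\<bar>det B\<bar> = 2"
  shows "\<exists>p r V U Vs Us.
           1 \<le> p \<and> p \<le> d \<and> (\<forall>j \<in> {1..<p}. r j \<in> {0, 1}) \<and>
           V \<in> unimod d \<and> U \<in> unimod d \<and>
           set Vs \<subseteq> elem d \<and> set Us \<subseteq> elem d \<and>
           B = Lmat d p r * Dmat d p * V \<and>
           B = Iswap d p d * Mmat d p r * Dmat d d * U \<and>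
           B = prod_mats d Vs * Dmat d d * prod_mats d Us"
proof -
  have "even (det B)" using assms(2) by (metis dvd_abs_iff dvd_refl)
  then obtain p r V where p: "1 \<le> p" "p \<le> d" and r: "\<forall>j. r j \<in> {0, 1}"
    and V: "V \<in> carrier_mat d d" and B1: "B = Lmat d p r * Dmat d p * V"
    using even_det_factor_Lmat_Dmat[OF assms(1)] by metis
  have V_unimod: "V \<in> unimod d"
    using assms(2) V det_Lmat_Dmat_mult[OF p V, of r] by (simp add: B1 unimod_iff abs_mult)
  define S where "S = Iswap d p d"
  have S: "S \<in> unimod d"
    using p elem_in_unimod swaprows_mat_in_elem[of "p - 1" d "d - 1"]
    by (simp add: S_def Iswap_eq_swaprows_mat)
  define U where "U = S * V"
  have U_unimod: "U \<in> unimod d" using unimod_mult[OF S V_unimod] by (simp add: U_def)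
  have B2: "B = S * Mmat d p r * Dmat d d * U"
    using B1 Lmat_Dmat_eq_Iswap_Mmat_Dmat[OF p V] by (simp add: S_def U_def)
  obtain Vs where Vs: "set Vs \<subseteq> elem d" "S * Mmat d p r = prod_mats d Vs"
    using elem_prod_if_unimod[OF unimod_mult[OF S Mmat_in_unimod[OF p(2)]]]
    unfolding elem_prod_def by blast
  obtain Us where Us: "set Us \<subseteq> elem d" "U = prod_mats d Us"
    using elem_prod_if_unimod[OF U_unimod] unfolding elem_prod_def by blast
  have B3: "B = prod_mats d Vs * Dmat d d * prod_mats d Us"
    using B2 Vs(2) Us(2) by simp
  show ?thesis
    using p r V_unimod U_unimod Vs(1) Us(1) B1 B2 B3 unfolding S_def
    by (intro exI[of _ p] exI[of _ r] exI[of _ V] exI[of _ U] exI[of _ Vs] exI[of _ Us]) blast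
qed

end
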